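(* For every positive integer $n$, $$\sum_{r=1}^{n-1}\frac{(-1)^rB_r}{r}\left(\frac{1}{n}\sum_{l=r}^{n}(-1)^l\binom{n}{l}H_{l-1}+\frac{1}{r(n-r)}\right)=\frac{H_{n-1}^{(2)}}{n}+\frac{H_{n-1}}{n^2}.$$
   Context: The Bernoulli numbers $B_n$ are defined by $\sum_{n=0}^\infty \frac{B_n}{n!}t^n=\frac{t}{e^t-1}$ (so $B_1=-\tfrac12$). For $m\ge 0$, $H_m=\sum_{k=1}^m \frac1k$ and $H_m^{(2)}=\sum_{k=1}^m\frac1{k^2}$ (empty sums are $0$, so $H_0=H_0^{(2)}=0$). *)

theory Defs
  imports "HOL-Analysis.Analysis" "HOL-Computational_Algebra.Formal_Power_Series"
begin

text \<open>Bernoulli numbers via the exponential generating function t/(e^t - 1)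
  (as a formal power series over the rationals/reals), so B 1 = -1/2.\<close>
definition bernoulli_num :: "nat \<Rightarrow> real" where
  "bernoulli_num n = fact n * fps_nth (fps_X / (fps_exp 1 - 1)) n"

definition H1 :: "nat \<Rightarrow> real" where
  "H1 m = (\<Sum>k=1..m. 1 / real k)"

definition H2 :: "nat \<Rightarrow> real" where
  "H2 m = (\<Sum>k=1..m. 1 / (real k)^2)"

end

theory Submission
  imports Defs
begin

text \<open>Write \<open>n = N + 1\<close>. The inner alternating sum telescopes: with
  \<open>X q = C(N,q) H1 q - (\<Sum>M=1..N. C(M-1,q)/M)\<close> one has \<open>X q + X (q+1) = C(N+1,q+1) H1 q\<close>
  and \<open>X (N+1) = 0\<close>, so the sum over \<open>l \<ge> r\<close> equals \<open>(-1)^r X (r-1)\<close>. Substituting this and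
  splitting \<open>1/(r(n-r))\<close> into partial fractions, the \<open>r\<close>-th summand becomes
  \<open>U r / n + V r / n\<^sup>2\<close>. After exchanging the order of summation, \<open>(\<Sum>r. U r) = H2 N\<close> and
  \<open>(\<Sum>r. V r) = H1 N\<close> reduce to the binomial recurrence of the Bernoulli numbers in the form
  \<open>(\<Sum>r=1..M. C(M,r) B_r) = (-1)^M B_M - 1\<close>, which together with the reflection
  \<open>(-1)^M B_M = B_M + [M = 1]\<close> is read off from the generating function \<open>t/(e^t - 1)\<close>.\<close>

definition bernoulli_egf :: "real fps" where
  "bernoulli_egf = fps_X / (fps_exp 1 - 1)"

lemma fps_nth_bernoulli_egf: "fps_nth bernoulli_egf n = bernoulli_num n / fact n"
  by (simp add: bernoulli_num_def bernoulli_egf_def)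

lemma fps_exp_minus_1_nonzero: "fps_exp (1::real) - 1 \<noteq> 0"
proof
  assume "fps_exp (1::real) - 1 = 0"
  then have "fps_nth (fps_exp (1::real) - 1) 1 = 0" by simp
  then show False by simp
qed

lemma bernoulli_egf_times: "bernoulli_egf * (fps_exp 1 - 1) = fps_X"
proof -
  have "subdegree (fps_exp (1::real) - 1) = 1"
    by (rule subdegreeI) auto
  then have "fps_exp (1::real) - 1 dvd fps_X"
    by (simp add: fps_dvd_iff[OF fps_exp_minus_1_nonzero])
  then show ?thesis
    unfolding bernoulli_egf_def by (rule dvd_div_mult_self)
qed

lemma bernoulli_num_recurrence:
  assumes "m \<ge> 1"
  shows "(\<Sum>r<m. real (m choose r) * bernoulli_num r) = (if m = 1 then 1 else 0)"
proof -
  have "(if m = 1 then 1 else 0) = fps_nth (bernoulli_egf * (fps_exp 1 - 1)) m"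
    by (simp add: bernoulli_egf_times)
  also have "\<dots> = (\<Sum>r\<le>m. bernoulli_num r / fact r * fps_nth (fps_exp 1 - 1) (m - r))"
    by (simp add: fps_mult_nth atLeast0AtMost fps_nth_bernoulli_egf)
  also have "\<dots> = (\<Sum>r<m. bernoulli_num r / (fact r * fact (m - r)))"
    using assms by (simp add: lessThan_Suc_atMost[symmetric] mult.commute)
  also have "\<dots> = (\<Sum>r<m. real (m choose r) * bernoulli_num r) / fact m"
    by (simp add: sum_divide_distrib binomial_fact)
  finally show ?thesis
    by (simp add: field_simps split: if_splits)
qed

lemma bernoulli_num_0 [simp]: "bernoulli_num 0 = 1"
  using bernoulli_num_recurrence[of 1] by simp

lemma bernoulli_egf_reflect: "bernoulli_egf oo (- fps_X) = bernoulli_egf + fps_X"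
proof (rule mult_right_cancel[THEN iffD1])
  show "fps_exp (1::real) - 1 \<noteq> 0" by (rule fps_exp_minus_1_nonzero)
  let ?E = "bernoulli_egf oo - fps_X"
  have E: "?E * (fps_exp (-1) - 1) = - fps_X"
    using fps_compose_mult_distrib[of "- fps_X :: real fps" bernoulli_egf "fps_exp 1 - 1"]
    by (simp add: bernoulli_egf_times fps_compose_sub_distrib fps_compose_uminus)
  have "fps_exp 1 - 1 = (1 - fps_exp (-1)) * fps_exp (1::real)"
    by (simp add: algebra_simps flip: fps_exp_add_mult)
  then have "?E * (fps_exp 1 - 1) = - (?E * (fps_exp (-1) - 1)) * fps_exp 1"
    by (simp add: algebra_simps)
  also have "\<dots> = fps_X * fps_exp 1"
    by (simp add: E)
  also have "\<dots> = fps_X + fps_X * (fps_exp 1 - 1)"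
    by (simp add: right_diff_distrib)
  also have "\<dots> = (bernoulli_egf + fps_X) * (fps_exp 1 - 1)"
    by (simp only: distrib_right bernoulli_egf_times)
  finally show "?E * (fps_exp 1 - 1) = (bernoulli_egf + fps_X) * (fps_exp 1 - 1)" .
qed

lemma bernoulli_num_reflect: "(-1)^n * bernoulli_num n = bernoulli_num n + (if n = 1 then 1 else 0)"
proof -
  have "(-1)^n * fps_nth bernoulli_egf n = fps_nth bernoulli_egf n + (if n = 1 then 1 else 0)"
    using arg_cong[OF bernoulli_egf_reflect, of "\<lambda>f. fps_nth f n"]
    by (simp add: fps_compose_uminus')
  then show ?thesis
    by (auto simp: fps_nth_bernoulli_egf field_simps)
qed

definition bernoulli_plus :: "nat \<Rightarrow> real" where
  "bernoulli_plus r = (-1)^r * bernoulli_num r"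

lemma bernoulli_plus_eq: "bernoulli_plus n = bernoulli_num n + (if n = 1 then 1 else 0)"
  by (simp add: bernoulli_plus_def bernoulli_num_reflect)

lemma sum_binomial_bernoulli: "(\<Sum>r\<le>m. real (m choose r) * bernoulli_num r) = bernoulli_plus m"
proof (cases "m = 0")
  case False
  then show ?thesis
    using bernoulli_num_recurrence[of m]
    by (simp add: lessThan_Suc_atMost[symmetric] bernoulli_plus_eq)
qed (simp add: bernoulli_plus_def)

lemma sum_binomial_bernoulli_from_1:
  assumes "m \<le> N"
  shows "(\<Sum>r=1..N. real (m choose r) * bernoulli_num r) = bernoulli_plus m - 1"
proof -
  have "(\<Sum>r=1..N. real (m choose r) * bernoulli_num r)
        = (\<Sum>r\<in>{1..m}. real (m choose r) * bernoulli_num r)"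
    using assms by (intro sum.mono_neutral_right) auto
  also have "\<dots> = (\<Sum>r\<le>m. real (m choose r) * bernoulli_num r) - 1"
    by (simp add: atMost_atLeast0 sum.atLeast_Suc_atMost)
  finally show ?thesis
    by (simp add: sum_binomial_bernoulli)
qed

lemma sum_bernoulli_binomial_div:
  assumes "\<And>j. j \<in> J \<Longrightarrow> j \<le> N"
  shows "(\<Sum>k=1..N. bernoulli_num k * (\<Sum>j\<in>J. real (j choose k) / w j))
         = (\<Sum>j\<in>J. (bernoulli_plus j - 1) / w j)"
proof -
  have "(\<Sum>k=1..N. bernoulli_num k * (\<Sum>j\<in>J. real (j choose k) / w j))
        = (\<Sum>j\<in>J. (\<Sum>k=1..N. real (j choose k) * bernoulli_num k) / w j)"
    by (simp add: sum_distrib_left sum_divide_distrib algebra_simps) (rule sum.swap)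
  also have "\<dots> = (\<Sum>j\<in>J. (bernoulli_plus j - 1) / w j)"
    using assms by (intro sum.cong refl) (metis sum_binomial_bernoulli_from_1)
  finally show ?thesis .
qed

lemma H1_0 [simp]: "H1 0 = 0"
  by (simp add: H1_def)

lemma H1_Suc: "H1 (Suc m) = H1 m + 1 / real (Suc m)"
  by (simp add: H1_def)

lemma binomial_div_Suc: "real (Suc n choose Suc k) / real (Suc n) = real (n choose k) / real (Suc k)"
  using Suc_times_binomial_eq[of n k] by (simp add: field_simps flip: of_nat_mult)

lemma sum_binomial_div_index:
  assumes "k \<ge> 1"
  shows "(\<Sum>j=1..n. real (j choose k) / real j) = real (n choose k) / real k"
proof (induction n)
  case (Suc n)
  obtain k' where k: "k = Suc k'" using assms by (cases k) auto
  have "real (Suc n choose k) / real (Suc n) = real (n choose k') / real k"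
    unfolding k by (rule binomial_div_Suc)
  then show ?case
    using Suc by (simp add: k add_divide_distrib)
qed (use assms in simp)

lemma sum_binomial_div_complement:
  "(\<Sum>m<n. real (m choose k) / real (n - m)) = real (n choose k) * (H1 n - H1 k)"
proof (induction n arbitrary: k)
  case 0
  show ?case by (cases k) simp_all
next
  case (Suc n)
  show ?case
  proof (cases k)
    case 0
    then show ?thesis
      using Suc.IH[of 0] by (subst sum.lessThan_Suc_shift) (simp add: H1_Suc)
  next
    case (Suc k')
    have "(\<Sum>m<Suc n. real (m choose k) / real (Suc n - m))
          = (\<Sum>m<n. real (m choose k') / real (n - m))
            + (\<Sum>m<n. real (m choose k) / real (n - m))"
      by (subst sum.lessThan_Suc_shift) (simp add: Suc sum.distrib add_divide_distrib)
    also have "\<dots> = real (n choose k') * (H1 n - H1 k') + real (n choose k) * (H1 n - H1 k)"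
      using Suc.IH by simp
    also have "\<dots> = real (Suc n choose k) * (H1 n - H1 k) + real (n choose k') / real k"
      by (simp add: Suc H1_Suc algebra_simps add_divide_distrib)
    also have "\<dots> = real (Suc n choose k) * (H1 (Suc n) - H1 k)"
      using binomial_div_Suc[of n k'] by (simp only: Suc H1_Suc) (simp add: algebra_simps add_divide_distrib)
    finally show ?thesis .
  qed
qed

lemma sum_alternating_binomial_harmonic:
  assumes "q \<le> N"
  shows "(\<Sum>l=Suc q..Suc N. (-1)^l * real (Suc N choose l) * H1 (l - 1))
         = (-1)^Suc q * (real (N choose q) * H1 q - (\<Sum>M=1..N. real ((M - 1) choose q) / real M))"
proof -
  define X where "X i = real (N choose i) * H1 i - (\<Sum>M=1..N. real ((M - 1) choose i) / real M)" for i
  define g where "g i = (-1)^i * X i" for i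
  have adjacent: "X i + X (Suc i) = real (Suc N choose Suc i) * H1 i" for i
  proof -
    have "(\<Sum>M=1..N. real ((M - 1) choose i) / real M)
          + (\<Sum>M=1..N. real ((M - 1) choose Suc i) / real M)
          = (\<Sum>M=1..N. real (M choose Suc i) / real M)"
      unfolding sum.distrib[symmetric] add_divide_distrib[symmetric]
      by (intro sum.cong refl) (auto simp: Suc_le_eq gr0_conv_Suc)
    also have "\<dots> = real (N choose Suc i) / real (Suc i)"
      by (rule sum_binomial_div_index) simp
    finally show ?thesis
      by (simp add: X_def H1_Suc algebra_simps)
  qed
  have "(-1)^l * real (Suc N choose l) * H1 (l - 1) = g l - g (l - 1)" if "l \<ge> 1" for l
  proof -
    obtain i where l: "l = Suc i" using \<open>l \<ge> 1\<close> by (cases l) auto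
    have "(-1)^l * real (Suc N choose l) * H1 (l - 1) = (-1)^Suc i * (X i + X (Suc i))"
      by (simp add: l adjacent)
    then show ?thesis
      by (simp add: g_def l algebra_simps)
  qed
  then have "(\<Sum>l=Suc q..Suc N. (-1)^l * real (Suc N choose l) * H1 (l - 1))
             = (\<Sum>l=Suc q..Suc N. g l - g (l - 1))"
    by (intro sum.cong) auto
  also have "\<dots> = g (Suc N) - g q"
    using assms by (intro sum_telescope'') simp
  also have "g (Suc N) = 0"
    by (auto simp: g_def X_def binomial_eq_0 intro!: sum.neutral)
  finally show ?thesis
    by (simp add: g_def X_def)
qed

lemma sum_inverse_complement: "(\<Sum>m<n. 1 / real (n - m)) = H1 n"
  using sum_binomial_div_complement[where n = n and k = 0]
  by (simp only: binomial_n_0 of_nat_1 H1_0 diff_zero mult_1)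

lemma binomial_harmonic_decompose:
  assumes "k \<ge> 1"
  shows "real (n choose k) * H1 (k - 1)
         = real (n choose k) * H1 n - (\<Sum>m<n. real (m choose k) / real (n - m))
           - (\<Sum>j=1..n. real (j choose k) / real j)"
proof -
  obtain k' where k: "k = Suc k'" using assms by (cases k) auto
  show ?thesis
    unfolding sum_binomial_div_complement sum_binomial_div_index[OF assms]
    by (simp add: k H1_Suc algebra_simps)
qed

lemma sum_bernoulli_binomial_harmonic:
  "(\<Sum>k=1..n. bernoulli_num k * real (n choose k) * H1 (k - 1))
   = (bernoulli_plus n + 1) * H1 n - (\<Sum>m<n. bernoulli_plus m / real (n - m))
     - (\<Sum>j=1..n. bernoulli_plus j / real j)"
proof -
  have "(\<Sum>k=1..n. bernoulli_num k * real (n choose k) * H1 (k - 1))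
        = (\<Sum>k=1..n. H1 n * (real (n choose k) * bernoulli_num k)
             - bernoulli_num k * (\<Sum>m<n. real (m choose k) / real (n - m))
             - bernoulli_num k * (\<Sum>j=1..n. real (j choose k) / real j))"
    by (intro sum.cong refl)
      (simp only: atLeastAtMost_iff mult.assoc binomial_harmonic_decompose, simp add: algebra_simps)
  also have "\<dots> = H1 n * (bernoulli_plus n - 1)
          - (\<Sum>m<n. (bernoulli_plus m - 1) / real (n - m))
          - (\<Sum>j=1..n. (bernoulli_plus j - 1) / real j)"
  proof -
    have "(\<Sum>k=1..n. real (n choose k) * bernoulli_num k) = bernoulli_plus n - 1"
      by (rule sum_binomial_bernoulli_from_1) simp
    moreover have "(\<Sum>k=1..n. bernoulli_num k * (\<Sum>m<n. real (m choose k) / real (n - m)))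
                   = (\<Sum>m<n. (bernoulli_plus m - 1) / real (n - m))"
      by (rule sum_bernoulli_binomial_div) simp
    moreover have "(\<Sum>k=1..n. bernoulli_num k * (\<Sum>j=1..n. real (j choose k) / real j))
                   = (\<Sum>j=1..n. (bernoulli_plus j - 1) / real j)"
      by (rule sum_bernoulli_binomial_div) simp
    ultimately show ?thesis
      by (simp only: sum_subtractf sum_distrib_left[symmetric])
  qed
  also have "\<dots> = (bernoulli_plus n + 1) * H1 n - (\<Sum>m<n. bernoulli_plus m / real (n - m))
          - (\<Sum>j=1..n. bernoulli_plus j / real j)"
    using sum_inverse_complement[of n]
    by (simp add: diff_divide_distrib sum_subtractf H1_def algebra_simps)
  finally show ?thesis .
qed

lemma sum_bernoulli_binomial_harmonic_Suc:
  "(\<Sum>r=1..N. bernoulli_num r * real (Suc N choose r) * H1 (r - 1)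
               + bernoulli_plus r / real r + bernoulli_plus r / real (Suc N - r)) = H1 N"
proof -
  define A where "A = (\<Sum>r=1..N. bernoulli_num r * real (Suc N choose r) * H1 (r - 1))"
  define P where "P = (\<Sum>r=1..N. bernoulli_plus r / real r)"
  define Q where "Q = (\<Sum>r=1..N. bernoulli_plus r / real (Suc N - r))"
  have "{..<Suc N} = insert 0 {1..N}" by auto
  then have Q': "(\<Sum>m<Suc N. bernoulli_plus m / real (Suc N - m)) = 1 / real (Suc N) + Q"
    by (simp add: Q_def bernoulli_plus_def del: lessThan_Suc)
  have A': "(\<Sum>k=1..Suc N. bernoulli_num k * real (Suc N choose k) * H1 (k - 1))
            = A + bernoulli_num (Suc N) * H1 N"
    by (simp add: A_def)
  have P': "(\<Sum>j=1..Suc N. bernoulli_plus j / real j) = P + bernoulli_plus (Suc N) / real (Suc N)"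
    by (simp add: P_def)
  have "A + bernoulli_num (Suc N) * H1 N = (bernoulli_plus (Suc N) + 1) * H1 (Suc N)
          - (1 / real (Suc N) + Q) - (P + bernoulli_plus (Suc N) / real (Suc N))"
    using sum_bernoulli_binomial_harmonic[of "Suc N"] unfolding A' P' Q' .
  then have "A + P + Q = (bernoulli_plus (Suc N) - bernoulli_num (Suc N) + 1) * H1 N"
    unfolding H1_Suc by (simp add: ring_distribs add_divide_distrib)
  also have "\<dots> = H1 N"
    by (cases "N = 0") (simp_all add: bernoulli_plus_eq)
  finally show ?thesis
    by (simp add: A_def P_def Q_def sum.distrib)
qed

lemma binomial_pred_div:
  assumes "r \<ge> 1"
  shows "real ((M - 1) choose (r - 1)) / real M / real r = real (M choose r) / real M ^ 2"
proof (cases "M = 0")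
  case False
  have "real r * real (M choose r) = real M * real ((M - 1) choose (r - 1))"
    using times_binomial_minus1_eq[of r M] assms by (simp flip: of_nat_mult)
  then show ?thesis
    using False assms by (simp add: field_simps power2_eq_square)
qed simp

lemma sum_bernoulli_H2:
  "(\<Sum>r=1..N. bernoulli_plus r / real r ^ 2
               - bernoulli_num r / real r * (\<Sum>M=1..N. real ((M - 1) choose (r - 1)) / real M)) = H2 N"
proof -
  have "(\<Sum>r=1..N. bernoulli_num r / real r * (\<Sum>M=1..N. real ((M - 1) choose (r - 1)) / real M))
        = (\<Sum>r=1..N. bernoulli_num r * (\<Sum>M=1..N. real (M choose r) / real M ^ 2))"
  proof (intro sum.cong refl)
    fix r assume "r \<in> {1..N}"
    then have "r \<ge> 1" by simp
    have "bernoulli_num r / real r * (\<Sum>M=1..N. real ((M - 1) choose (r - 1)) / real M)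
          = bernoulli_num r * (\<Sum>M=1..N. real ((M - 1) choose (r - 1)) / real M / real r)"
      unfolding sum_divide_distrib[symmetric] by simp
    also have "\<dots> = bernoulli_num r * (\<Sum>M=1..N. real (M choose r) / real M ^ 2)"
      by (simp only: binomial_pred_div[OF \<open>r \<ge> 1\<close>])
    finally show "bernoulli_num r / real r * (\<Sum>M=1..N. real ((M - 1) choose (r - 1)) / real M)
          = bernoulli_num r * (\<Sum>M=1..N. real (M choose r) / real M ^ 2)" .
  qed
  also have "\<dots> = (\<Sum>M=1..N. (bernoulli_plus M - 1) / real M ^ 2)"
    by (rule sum_bernoulli_binomial_div) simp
  finally show ?thesis
    by (simp add: sum_subtractf diff_divide_distrib H2_def)
qed

text \<open>With \<open>n = r + m\<close>: \<open>c1/r = c2/n\<close> and \<open>1/(r\<^sup>2 m) = 1/(n r\<^sup>2) + (1/r + 1/m)/n\<^sup>2\<close>.\<close>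

lemma partial_fraction_regroup:
  fixes b bp c1 c2 h G r m :: real
  assumes "r > 0" "m > 0" "(r + m) * c1 = c2 * r"
  shows "b * (c1 * h - G) / (r * (r + m)) + bp / (r^2 * m)
         = (bp / r^2 - b / r * G) / (r + m) + (b * c2 * h + bp / r + bp / m) / (r + m)^2"
proof -
  have nz: "r \<noteq> 0" "m \<noteq> 0" "r + m \<noteq> 0" using assms by auto
  have c2: "c2 = (r + m) * c1 / r" using assms by (simp add: field_simps)
  show ?thesis
    unfolding c2 using nz by (simp add: divide_simps power2_eq_square) (simp add: algebra_simps)
qed

lemma summand_decompose:
  assumes "1 \<le> r" "r \<le> N"
  shows "((-1)^r * bernoulli_num r / real r) *
           ((1 / real (Suc N)) * (\<Sum>l=r..Suc N. (-1)^l * real (Suc N choose l) * H1 (l - 1))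
            + 1 / (real r * real (Suc N - r)))
         = (bernoulli_plus r / real r ^ 2
              - bernoulli_num r / real r * (\<Sum>M=1..N. real ((M - 1) choose (r - 1)) / real M))
             / real (Suc N)
           + (bernoulli_num r * real (Suc N choose r) * H1 (r - 1)
              + bernoulli_plus r / real r + bernoulli_plus r / real (Suc N - r)) / real (Suc N) ^ 2"
proof -
  obtain q where r: "r = Suc q" using assms by (cases r) auto
  define G where "G = (\<Sum>M=1..N. real ((M - 1) choose (r - 1)) / real M)"
  define m where "m = real (Suc N - r)"
  have n: "real (Suc N) = real r + m" and "m > 0"
    using assms by (auto simp: m_def)
  have tail: "(\<Sum>l=r..Suc N. (-1)^l * real (Suc N choose l) * H1 (l - 1))
              = (-1)^r * (real (N choose (r - 1)) * H1 (r - 1) - G)"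
    using sum_alternating_binomial_harmonic[of q N] assms by (simp add: r G_def)
  have "((-1)^r * bernoulli_num r / real r) *
          ((1 / real (Suc N)) * (\<Sum>l=r..Suc N. (-1)^l * real (Suc N choose l) * H1 (l - 1))
           + 1 / (real r * real (Suc N - r)))
        = bernoulli_num r * (real (N choose (r - 1)) * H1 (r - 1) - G) / (real r * (real r + m))
          + bernoulli_plus r / (real r ^ 2 * m)"
    unfolding tail n m_def[symmetric] using \<open>m > 0\<close> assms
    by (simp add: bernoulli_plus_def power2_eq_square divide_simps add_pos_pos flip: power_add mult_2)
      (simp add: algebra_simps)
  also have "\<dots> = (bernoulli_plus r / real r ^ 2 - bernoulli_num r / real r * G) / (real r + m)
          + (bernoulli_num r * real (Suc N choose r) * H1 (r - 1)
             + bernoulli_plus r / real r + bernoulli_plus r / m) / (real r + m) ^ 2"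
    using binomial_div_Suc[of N q] \<open>m > 0\<close> assms n
    by (intro partial_fraction_regroup) (simp_all add: r field_simps)
  finally show ?thesis
    unfolding G_def n m_def .
qed

theorem mainTheorem1:
  fixes n :: nat
  assumes "n \<ge> 1"
  shows "(\<Sum>r=1..n-1. ((-1)^r * bernoulli_num r / real r) *
            ((1 / real n) * (\<Sum>l=r..n. (-1)^l * real (n choose l) * H1 (l - 1))
             + 1 / (real r * real (n - r))))
         = H2 (n - 1) / real n + H1 (n - 1) / (real n)^2"
proof -
  obtain N where n: "n = Suc N" using assms by (cases n) auto
  have "(\<Sum>r=1..n-1. ((-1)^r * bernoulli_num r / real r) *
            ((1 / real n) * (\<Sum>l=r..n. (-1)^l * real (n choose l) * H1 (l - 1))
             + 1 / (real r * real (n - r))))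
        = (\<Sum>r=1..N. (bernoulli_plus r / real r ^ 2
              - bernoulli_num r / real r * (\<Sum>M=1..N. real ((M - 1) choose (r - 1)) / real M))
             / real (Suc N)
           + (bernoulli_num r * real (Suc N choose r) * H1 (r - 1)
              + bernoulli_plus r / real r + bernoulli_plus r / real (Suc N - r)) / real (Suc N) ^ 2)"
    unfolding n diff_Suc_1 by (intro sum.cong refl summand_decompose) auto
  also have "\<dots> = H2 N / real (Suc N) + H1 N / real (Suc N) ^ 2"
    by (subst sum.distrib)
      (simp only: sum_divide_distrib[symmetric] sum_bernoulli_H2 sum_bernoulli_binomial_harmonic_Suc)
  finally show ?thesis
    by (simp add: n)
qed

end
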